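(* Let $\sigma:\mathbb{R}\to\mathbb{R}$ be bounded and differentiable with bounded derivative. Let $d_1,d_2,\kappa,L,n,K_n\in\mathbb{N}$ with $\kappa\le\min\{d_1,d_2\}$ and $L\ge2$, and consider the network $f_{\mathbf{w}}$ described in the context with architecture $M_1=M_{L+1}=\kappa$, $M_2=\dots=M_L=1$, $k_1=\dots=k_{L-1}=2\kappa^2$, $k_0=k_L=1$. Let $(\mathbf{X}_1,Y_1),\dots,(\mathbf{X}_n,Y_n)\in[0,1]^{D}\times\{0,1\}$, let $c_4>0$, and define $$F_n(\mathbf{w})=\frac1n\sum_{i=1}^n|Y_i-f_{\mathbf{w}}(\mathbf{X}_i)|^2+c_4\sum_{k=1}^{K_n}w_k^2 .$$ Let $t_n,L_n>0$ with $t_n\ge L_n$, let $\gamma_n^*\ge1$, $B_n\ge1$, and let $\mathbf{w},\mathbf{v}$ be weight vectors such that $|w_k|\le\gamma_n^*$ for $k=1,\dots,K_n$, $|w^{(r)}_{s_2,k}|\le B_n$ and $|w^{(r)}_{t_1,t_2,s_1,s_2,k}|\le B_n$ for all indices with $r=2,\dots,L$, and $$\|\mathbf{w}-\mathbf{v}\|_\infty^2\le\frac{2t_n}{L_n}\max\{F_n(\mathbf{v}),1\}.$$ Then $$\|(\nabla_{\mathbf{w}}F_n)(\mathbf{w})\|\le c_8\cdot K_n^{3/2}\cdot B_n^{2L}\cdot(\gamma_n^* )^2\cdot\sqrt{\frac{t_n}{L_n}\max\{F_n(\mathbf{v}),1\}},$$ where $c_8>0$ is a constant not depending on $n$, $K_n$,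 $B_n$, $\gamma_n^*$, $t_n$, $L_n$, $\mathbf{w}$, $\mathbf{v}$ or the data.
   Context: $D=\{1,\dots,d_1\}\times\{1,\dots,d_2\}$ and $[0,1]^D$ is the set of families $(x_{i,j})_{(i,j)\in D}$ with entries in $[0,1]$. Network: for $k\in\{1,\dots,K_n\}$ and $(i,j)\in D$, $o^{(0)}_{(i,j),1,k}=x_{i,j}$ and for $r=1,\dots,L$, $s_2\in\{1,\dots,k_r\}$, $$o^{(r)}_{(i,j),s_2,k}=\sigma\Big(\sum_{s_1=1}^{k_{r-1}}\sum_{t_1,t_2\in\{1,\dots,M_r\},\,(i+t_1-1,j+t_2-1)\in D} w^{(r)}_{t_1,t_2,s_1,s_2,k}\, o^{(r-1)}_{(i+t_1-1,j+t_2-1),s_1,k}+w^{(r)}_{s_2,k}\Big),$$ $f_{\mathbf{w}_k,\mathbf{w}_{bias,k}}(\mathbf{x})=\frac{1}{(d_1-M_{L+1}+1)(d_2-M_{L+1}+1)}\sum_{i=1}^{d_1-M_{L+1}+1}\sum_{j=1}^{d_2-M_{L+1}+1}o^{(L)}_{(i,j),1,k}$, and $f_{\mathbf{w}}(\mathbf{x})=\sum_{k=1}^{K_n}w_kf_{\mathbf{w}_k,\mathbf{w}_{bias,k}}(\mathbf{x})$. The weight vector $\mathbf{w}$ collects all $w_k$, $w^{(r)}_{t_1,t_2,s_1,s_2,k}$, $w^{(r)}_{s_2,k}$; $\nabla_{\mathbf{w}}$ is the gradient with respect to all these components, $\|\cdot\|$ the Euclidean norm and $\|\cdot\|_\infty$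 the maximum of absolute values of components. *)

theory Defs
  imports "HOL-Analysis.Analysis"
begin

text \<open>Indices of the weight vector: outer weights w_k, convolution weights
  w^(r)_{t1,t2,s1,s2,k} and bias weights w^(r)_{s2,k}.\<close>
datatype widx = Outer nat | Conv nat nat nat nat nat nat | Bias nat nat nat

definition pix :: "nat \<Rightarrow> nat \<Rightarrow> (nat \<times> nat) set" where
  "pix d1 d2 = {1..d1} \<times> {1..d2}"

text \<open>Outputs o^(r)_{p,s,k} of the k-th convolutional network; M r is the filter
  size of layer r, kc r the number of channels of layer r.\<close>
primrec cnn_o :: "(real \<Rightarrow> real) \<Rightarrow> nat \<Rightarrow> nat \<Rightarrow> (nat \<Rightarrow> nat) \<Rightarrow> (nat \<Rightarrow> nat)
    \<Rightarrow> (widx \<Rightarrow> real) \<Rightarrow> nat \<Rightarrow> (nat \<times> nat \<Rightarrow> real) \<Rightarrow> nat \<Rightarrow> nat \<times> nat \<Rightarrow> nat \<Rightarrow> real" where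
  "cnn_o \<sigma> d1 d2 M kc w k x 0 p s = x p"
| "cnn_o \<sigma> d1 d2 M kc w k x (Suc r) p s2 =
     \<sigma> ((\<Sum>s1\<in>{1..kc r}. \<Sum>t1\<in>{1..M (Suc r)}. \<Sum>t2\<in>{1..M (Suc r)}.
            (if (fst p + t1 - 1, snd p + t2 - 1) \<in> pix d1 d2
             then w (Conv (Suc r) t1 t2 s1 s2 k) *
                  cnn_o \<sigma> d1 d2 M kc w k x r (fst p + t1 - 1, snd p + t2 - 1) s1
             else 0))
        + w (Bias (Suc r) s2 k))"

definition cnn_fk :: "(real \<Rightarrow> real) \<Rightarrow> nat \<Rightarrow> nat \<Rightarrow> nat \<Rightarrow> (nat \<Rightarrow> nat) \<Rightarrow> (nat \<Rightarrow> nat)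
    \<Rightarrow> (widx \<Rightarrow> real) \<Rightarrow> nat \<Rightarrow> (nat \<times> nat \<Rightarrow> real) \<Rightarrow> real" where
  "cnn_fk \<sigma> d1 d2 L M kc w k x =
     (1 / (real (d1 - M (L+1) + 1) * real (d2 - M (L+1) + 1))) *
     (\<Sum>i\<in>{1..d1 - M (L+1) + 1}. \<Sum>j\<in>{1..d2 - M (L+1) + 1}.
        cnn_o \<sigma> d1 d2 M kc w k x L (i, j) 1)"

definition cnn_f :: "(real \<Rightarrow> real) \<Rightarrow> nat \<Rightarrow> nat \<Rightarrow> nat \<Rightarrow> (nat \<Rightarrow> nat) \<Rightarrow> (nat \<Rightarrow> nat)
    \<Rightarrow> nat \<Rightarrow> (widx \<Rightarrow> real) \<Rightarrow> (nat \<times> nat \<Rightarrow> real) \<Rightarrow> real" where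
  "cnn_f \<sigma> d1 d2 L M kc K w x = (\<Sum>k\<in>{1..K}. w (Outer k) * cnn_fk \<sigma> d1 d2 L M kc w k x)"

definition weight_idx :: "nat \<Rightarrow> (nat \<Rightarrow> nat) \<Rightarrow> (nat \<Rightarrow> nat) \<Rightarrow> nat \<Rightarrow> widx set" where
  "weight_idx L M kc K =
     {Outer k | k. k \<in> {1..K}} \<union>
     {Conv r t1 t2 s1 s2 k | r t1 t2 s1 s2 k. r \<in> {1..L} \<and> t1 \<in> {1..M r} \<and> t2 \<in> {1..M r}
         \<and> s1 \<in> {1..kc (r - 1)} \<and> s2 \<in> {1..kc r} \<and> k \<in> {1..K}} \<union>
     {Bias r s2 k | r s2 k. r \<in> {1..L} \<and> s2 \<in> {1..kc r} \<and> k \<in> {1..K}}"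

definition arch_M :: "nat \<Rightarrow> nat \<Rightarrow> nat \<Rightarrow> nat" where
  "arch_M \<kappa> L r = (if r = 1 \<or> r = L + 1 then \<kappa> else 1)"

definition arch_k :: "nat \<Rightarrow> nat \<Rightarrow> nat \<Rightarrow> nat" where
  "arch_k \<kappa> L r = (if r = 0 \<or> r = L then 1 else 2 * \<kappa>^2)"

definition Fn :: "(real \<Rightarrow> real) \<Rightarrow> nat \<Rightarrow> nat \<Rightarrow> nat \<Rightarrow> (nat \<Rightarrow> nat) \<Rightarrow> (nat \<Rightarrow> nat)
    \<Rightarrow> nat \<Rightarrow> nat \<Rightarrow> (nat \<Rightarrow> nat \<times> nat \<Rightarrow> real) \<Rightarrow> (nat \<Rightarrow> real) \<Rightarrow> real \<Rightarrow> (widx \<Rightarrow> real) \<Rightarrow> real" where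
  "Fn \<sigma> d1 d2 L M kc K n X Y c4 w =
     (1 / real n) * (\<Sum>i\<in>{1..n}. \<bar>Y i - cnn_f \<sigma> d1 d2 L M kc K w (X i)\<bar>^2)
     + c4 * (\<Sum>k\<in>{1..K}. (w (Outer k))^2)"

definition grad_norm :: "((widx \<Rightarrow> real) \<Rightarrow> real) \<Rightarrow> widx set \<Rightarrow> (widx \<Rightarrow> real) \<Rightarrow> real" where
  "grad_norm F I w = sqrt (\<Sum>i\<in>I. (deriv (\<lambda>z. F (w(i := z))) (w i))^2)"

definition sup_dist :: "widx set \<Rightarrow> (widx \<Rightarrow> real) \<Rightarrow> (widx \<Rightarrow> real) \<Rightarrow> real" where
  "sup_dist I w v = Max (insert 0 ((\<lambda>i. \<bar>w i - v i\<bar>) ` I))"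

end

theory Submission
  imports Defs
begin

text \<open>Each partial derivative of F_n is bounded by a Lipschitz constant of F_n in that single
  coordinate near w. Changing one weight by delta <= 1 moves the outputs of layer r by at most
  (G B)^r delta, with a gain G depending only on sigma and the architecture, because sigma is
  Lipschitz and the convolution weights of layers 2..L are bounded by B; the first-layer weights
  need no bound since their input x does not depend on the weights. A weight belongs to only one
  of the K_n subnetworks, so f_w moves by at most (C + gamma (G B)^L) delta, without a factor K_n.
  The derivative of the empirical risk involves the mean absolute residual at w, which is at most
  sqrt (F_n v) + K_n C (2 gamma + |w - v|_inf), hence of order K_n gamma sqrt (t_n / L_n max (F_n v) 1).
  Summing the squared partial bounds over the O(K_n) weights gives the remaining factor K_n^(1/2).\<close>

abbreviation sample_mean :: "nat \<Rightarrow> (nat \<Rightarrow> real) \<Rightarrow> real" where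
  "sample_mean n a \<equiv> (1 / real n) * (\<Sum>j\<in>{1..n}. a j)"

lemma abs_diff_le_of_bounded_deriv:
  fixes f :: "real \<Rightarrow> real"
  assumes "\<And>x. f differentiable (at x)" and "\<And>x. \<bar>deriv f x\<bar> \<le> C"
  shows "\<bar>f a - f b\<bar> \<le> C * \<bar>a - b\<bar>"
  using field_differentiable_bound[of UNIV f "deriv f" C a b] assms
  by (simp add: DERIV_deriv_iff_real_differentiable)

lemma abs_deriv_le_of_local_lipschitz:
  fixes g :: "real \<Rightarrow> real"
  assumes "g differentiable (at x)" and "0 < e"
    and "\<And>z. \<bar>z - x\<bar> < e \<Longrightarrow> \<bar>g z - g x\<bar> \<le> M * \<bar>z - x\<bar>"
  shows "\<bar>deriv g x\<bar> \<le> M"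
proof -
  have "((\<lambda>h. (g (x + h) - g x) / h) \<longlongrightarrow> deriv g x) (at 0)"
    using assms(1) by (simp add: DERIV_deriv_iff_real_differentiable[symmetric] DERIV_def)
  then have "((\<lambda>h. \<bar>(g (x + h) - g x) / h\<bar>) \<longlongrightarrow> \<bar>deriv g x\<bar>) (at 0)"
    by (rule tendsto_rabs)
  moreover have "eventually (\<lambda>h. \<bar>(g (x + h) - g x) / h\<bar> \<le> M) (at 0)"
    unfolding eventually_at using assms(2) assms(3)[of "x + _"]
    by (intro exI[of _ e]) (auto simp: dist_real_def abs_divide divide_le_eq)
  ultimately show ?thesis by (rule tendsto_upperbound) simp
qed

lemma powr_three_halves: "real K powr (3/2) = real K * sqrt (real K)"
  by (cases "K = 0") (simp_all add: powr_add[of _ 1 "1/2", simplified] powr_half_sqrt)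

lemma abs_sum_le_card_mult:
  fixes f :: "'a \<Rightarrow> real"
  assumes "\<And>a. a \<in> A \<Longrightarrow> \<bar>f a\<bar> \<le> b"
  shows "\<bar>sum f A\<bar> \<le> real (card A) * b"
  by (rule order_trans[OF sum_abs sum_bounded_above]) (rule assms)

lemma abs_grid_mean_le:
  fixes g :: "nat \<Rightarrow> nat \<Rightarrow> real"
  assumes "\<And>i j. i \<in> {1..m} \<Longrightarrow> j \<in> {1..m'} \<Longrightarrow> \<bar>g i j\<bar> \<le> b" and "0 \<le> b"
  shows "\<bar>1 / (real m * real m') * (\<Sum>i\<in>{1..m}. \<Sum>j\<in>{1..m'}. g i j)\<bar> \<le> b"
proof -
  have "\<bar>\<Sum>i\<in>{1..m}. \<Sum>j\<in>{1..m'}. g i j\<bar> \<le> real m * (real m' * b)"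
    using assms by (intro order_trans[OF abs_sum_le_card_mult] mult_left_mono abs_sum_le_card_mult) auto
  then show ?thesis
    using assms(2) by (cases "m = 0 \<or> m' = 0") (auto simp: abs_mult field_simps)
qed

lemma abs_mult_diff_le:
  fixes a a' b b' :: real
  shows "\<bar>a' * b' - a * b\<bar> \<le> \<bar>a\<bar> * \<bar>b' - b\<bar> + \<bar>a' - a\<bar> * \<bar>b'\<bar>"
proof -
  have "a' * b' - a * b = a * (b' - b) + (a' - a) * b'"
    by (simp add: algebra_simps)
  then show ?thesis
    by (metis abs_mult abs_triangle_ineq)
qed

lemma sum_single_support:
  assumes "finite A" and "\<And>k. k \<in> A \<Longrightarrow> k \<noteq> a \<Longrightarrow> f k = 0"
  shows "sum f A = (if a \<in> A then f a else 0)"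
proof -
  have "sum f A = (\<Sum>k\<in>A. if k = a then f a else 0)"
    using assms(2) by (intro sum.cong) auto
  then show ?thesis using assms(1) by simp
qed

lemma sample_mean_abs_le:
  assumes "0 < s" and "sample_mean n (\<lambda>j. (a j)^2) \<le> s^2"
  shows "sample_mean n (\<lambda>j. \<bar>a j\<bar>) \<le> s"
proof (cases "n = 0")
  case False
  have "\<bar>a j\<bar> \<le> ((a j)^2 + s^2) / (2 * s)" for j
  proof -
    have "2 * s * \<bar>a j\<bar> \<le> (a j)^2 + s^2"
      using sum_squares_ge_zero[of "\<bar>a j\<bar> - s" 0] by (simp add: power2_eq_square algebra_simps)
    then show ?thesis using assms(1) by (simp add: field_simps)
  qed
  then have "sample_mean n (\<lambda>j. \<bar>a j\<bar>) \<le> sample_mean n (\<lambda>j. ((a j)^2 + s^2) / (2 * s))"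
    by (intro mult_left_mono sum_mono) auto
  also have "\<dots> = (sample_mean n (\<lambda>j. (a j)^2) + s^2) / (2 * s)"
    using False by (simp add: sum.distrib sum_divide_distrib[symmetric] field_simps)
  also have "\<dots> \<le> (s^2 + s^2) / (2 * s)"
    using assms by (intro divide_right_mono) auto
  also have "\<dots> = s"
    using assms(1) by (simp add: power2_eq_square)
  finally show ?thesis .
qed (use assms(1) in simp)

lemma sample_mean_le_add:
  assumes "1 \<le> n" and "\<And>j. j \<in> {1..n} \<Longrightarrow> a j \<le> b j + c"
  shows "sample_mean n a \<le> sample_mean n b + c"
proof -
  have "sample_mean n a \<le> sample_mean n (\<lambda>j. b j + c)"
    using assms(2) by (intro mult_left_mono sum_mono) auto
  also have "\<dots> = sample_mean n b + c"
    using assms(1) by (simp add: sum.distrib field_simps)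
  finally show ?thesis .
qed

lemma sample_mean_square_diff_le:
  assumes "\<And>j. j \<in> {1..n} \<Longrightarrow> \<bar>a j - b j\<bar> \<le> e"
  shows "\<bar>sample_mean n (\<lambda>j. \<bar>Y j - a j\<bar>^2) - sample_mean n (\<lambda>j. \<bar>Y j - b j\<bar>^2)\<bar>
    \<le> e * (2 * sample_mean n (\<lambda>j. \<bar>Y j - b j\<bar>) + e)"
proof (cases "n = 0")
  case False
  have "\<bar>\<bar>Y j - a j\<bar>^2 - \<bar>Y j - b j\<bar>^2\<bar> \<le> 2 * e * \<bar>Y j - b j\<bar> + e^2" if "j \<in> {1..n}" for j
  proof -
    have "\<bar>Y j - a j\<bar>^2 - \<bar>Y j - b j\<bar>^2 = 2 * (b j - a j) * (Y j - b j) + (b j - a j)^2"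
      by (simp add: power2_eq_square algebra_simps)
    then have "\<bar>\<bar>Y j - a j\<bar>^2 - \<bar>Y j - b j\<bar>^2\<bar> \<le> \<bar>2 * (b j - a j) * (Y j - b j)\<bar> + \<bar>(b j - a j)^2\<bar>"
      by (simp only: abs_triangle_ineq)
    also have "\<dots> = 2 * \<bar>b j - a j\<bar> * \<bar>Y j - b j\<bar> + \<bar>b j - a j\<bar>^2"
      by (simp only: abs_mult abs_power2 abs_numeral power2_abs)
    also have "\<dots> \<le> 2 * e * \<bar>Y j - b j\<bar> + e^2"
      using assms[OF that] by (intro add_mono mult_right_mono power_mono) auto
    finally show ?thesis .
  qed
  then have "\<bar>sample_mean n (\<lambda>j. \<bar>Y j - a j\<bar>^2) - sample_mean n (\<lambda>j. \<bar>Y j - b j\<bar>^2)\<bar>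
      \<le> sample_mean n (\<lambda>j. 2 * e * \<bar>Y j - b j\<bar> + e^2)"
    unfolding right_diff_distrib[symmetric] sum_subtractf[symmetric] abs_mult abs_divide abs_one abs_of_nat
    by (intro mult_left_mono order_trans[OF sum_abs] sum_mono) auto
  also have "\<dots> = e * (2 * sample_mean n (\<lambda>j. \<bar>Y j - b j\<bar>) + e)"
    using False by (simp add: sum.distrib sum_distrib_left[symmetric] power2_eq_square field_simps)
  finally show ?thesis .
qed simp

section \<open>Changing a single weight\<close>

lemma abs_fun_upd_diff_le:
  fixes w :: "'a \<Rightarrow> real"
  shows "\<bar>(w(i := z)) j - w j\<bar> \<le> \<bar>z - w i\<bar>"
  by (cases "j = i") auto

lemma differentiable_fun_upd_apply:
  fixes w :: "'a \<Rightarrow> real"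
  shows "(\<lambda>z. (w(i := z)) j) differentiable (at z0)"
  by (cases "j = i") auto

lemma differentiable_cnn_o_fun_upd:
  assumes "\<And>x. \<sigma> differentiable (at x)"
  shows "(\<lambda>z. cnn_o \<sigma> d1 d2 M kc (w(i := z)) k x r p s) differentiable (at z0)"
proof (induction r arbitrary: p s)
  case 0
  then show ?case by simp
next
  case (Suc r)
  have "(\<lambda>z. if c then (w(i := z)) j * cnn_o \<sigma> d1 d2 M kc (w(i := z)) k x r q s1 else 0)
      differentiable (at z0)" for c j q s1
    by (cases c) (simp_all del: fun_upd_apply add: differentiable_mult differentiable_fun_upd_apply Suc.IH)
  then show ?case
    by (simp only: cnn_o.simps)
      (intro differentiable_compose[where f = \<sigma>, OF assms] differentiable_add differentiable_sum
        differentiable_fun_upd_apply ballI finite_atLeastAtMost)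
qed

lemma differentiable_Fn_fun_upd:
  assumes "\<And>x. \<sigma> differentiable (at x)"
  shows "(\<lambda>z. Fn \<sigma> d1 d2 L M kc K n X Y c4 (w(i := z))) differentiable (at z0)"
proof -
  have "(\<lambda>z. cnn_f \<sigma> d1 d2 L M kc K (w(i := z)) x) differentiable (at z0)" for x
    unfolding cnn_f_def cnn_fk_def
    by (intro differentiable_mult differentiable_const differentiable_sum ballI finite_atLeastAtMost
        differentiable_fun_upd_apply differentiable_cnn_o_fun_upd[OF assms])
  then show ?thesis
    unfolding Fn_def power2_abs
    by (intro differentiable_add differentiable_mult differentiable_const differentiable_sum ballI
        finite_atLeastAtMost differentiable_power differentiable_diff differentiable_fun_upd_apply)
qed

fun widx_net :: "widx \<Rightarrow> nat" where
  "widx_net (Outer k) = k"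
| "widx_net (Conv r t1 t2 s1 s2 k) = k"
| "widx_net (Bias r s k) = k"

lemma widx_net_of_weight_idx: "i \<in> weight_idx L M kc K \<Longrightarrow> widx_net i \<in> {1..K}"
  by (auto simp: weight_idx_def)

lemma cnn_o_cong:
  assumes "\<And>r t1 t2 s1 s2. w (Conv r t1 t2 s1 s2 k) = w' (Conv r t1 t2 s1 s2 k)"
    and "\<And>r s. w (Bias r s k) = w' (Bias r s k)"
  shows "cnn_o \<sigma> d1 d2 M kc w k x r p s = cnn_o \<sigma> d1 d2 M kc w' k x r p s"
  by (induction r arbitrary: p s) (simp_all add: assms cong: if_cong)

lemma cnn_fk_fun_upd_other:
  assumes "k \<noteq> widx_net i \<or> i = Outer k"
  shows "cnn_fk \<sigma> d1 d2 L M kc (w(i := z)) k x = cnn_fk \<sigma> d1 d2 L M kc w k x"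
  unfolding cnn_fk_def using assms by (subst cnn_o_cong[where w' = w]) auto

lemma penalty_fun_upd_diff_le:
  fixes w :: "widx \<Rightarrow> real"
  assumes outer: "\<And>k. k \<in> {1..K} \<Longrightarrow> \<bar>w (Outer k)\<bar> \<le> \<gamma>" and "0 \<le> \<gamma>" and "\<bar>z - w i\<bar> \<le> 1"
  shows "\<bar>(\<Sum>k\<in>{1..K}. ((w(i := z)) (Outer k))^2) - (\<Sum>k\<in>{1..K}. (w (Outer k))^2)\<bar>
    \<le> (2 * \<gamma> + 1) * \<bar>z - w i\<bar>"
proof -
  define a where "a = widx_net i"
  have "(\<Sum>k\<in>{1..K}. ((w(i := z)) (Outer k))^2 - (w (Outer k))^2)
      = (if a \<in> {1..K} then ((w(i := z)) (Outer a))^2 - (w (Outer a))^2 else 0)"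
    by (intro sum_single_support) (auto simp: a_def)
  also have "\<bar>\<dots>\<bar> \<le> (2 * \<gamma> + 1) * \<bar>z - w i\<bar>"
  proof (cases "a \<in> {1..K} \<and> i = Outer a")
    case True
    then have "\<bar>z + w i\<bar> \<le> 2 * \<gamma> + 1"
      using outer[of a] \<open>\<bar>z - w i\<bar> \<le> 1\<close> by auto
    moreover have "z^2 - (w i)^2 = (z + w i) * (z - w i)"
      by (simp add: power2_eq_square algebra_simps)
    ultimately show ?thesis
      using True by (auto simp: abs_mult intro: mult_right_mono)
  qed (use \<open>0 \<le> \<gamma>\<close> in auto)
  finally show ?thesis
    by (simp add: sum_subtractf)
qed

lemma abs_le_sup_dist:
  assumes "finite I" and "i \<in> I"
  shows "\<bar>w i - v i\<bar> \<le> sup_dist I w v"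
  unfolding sup_dist_def using assms by (intro Max_ge) auto

lemma grad_norm_le_sqrt_card_mult:
  assumes "finite I" and "0 \<le> b" and "\<And>i. i \<in> I \<Longrightarrow> \<bar>deriv (\<lambda>z. F (w(i := z))) (w i)\<bar> \<le> b"
  shows "grad_norm F I w \<le> sqrt (real (card I)) * b"
proof -
  have "grad_norm F I w \<le> sqrt (\<Sum>i\<in>I. b^2)"
    unfolding grad_norm_def using assms(3)
    by (intro real_sqrt_le_mono sum_mono) (simp add: abs_le_square_iff[symmetric] assms(2))
  also have "\<dots> = sqrt (real (card I)) * b"
    using assms(2) by (simp add: real_sqrt_mult)
  finally show ?thesis .
qed

section \<open>Networks with a bounded Lipschitz activation\<close>

locale bounded_cnn =
  fixes \<sigma> :: "real \<Rightarrow> real" and C C' :: real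
    and d1 d2 L :: nat and M kc :: "nat \<Rightarrow> nat" and A1 A2 :: nat
  assumes activation_bounded: "\<bar>\<sigma> a\<bar> \<le> C"
    and one_le_activation_bound: "1 \<le> C" \<comment> \<open>so that C also bounds the inputs in [0, 1]\<close>
    and activation_lipschitz: "\<bar>\<sigma> a - \<sigma> b\<bar> \<le> C' * \<bar>a - b\<bar>"
    and channels_le: "kc r \<le> A1"
    and filter_size_le: "M r \<le> A2"
    and depth_pos: "0 < L"
    and output_channel: "1 \<le> kc L"
begin

lemma lipschitz_const_nonneg: "0 \<le> C'"
  using activation_lipschitz[of 1 0] by simp

text \<open>A1 * A2^2 bounds the number of summands of a pre-activation.\<close>

definition layer_gain :: real where
  "layer_gain = max 1 (C' * (real (A1 * A2^2) * (1 + C) + 1))"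

lemma one_le_layer_gain: "1 \<le> layer_gain"
  by (simp add: layer_gain_def)

lemma layer_gain_step:
  assumes "1 \<le> B" and "1 \<le> E" and "0 \<le> \<delta>"
  shows "C' * (real (A1 * A2^2) * (B * E * \<delta> + \<delta> * C) + \<delta>) \<le> layer_gain * B * E * \<delta>"
proof -
  define N where "N = real (A1 * A2^2)"
  have BE: "1 \<le> B * E"
    using assms(1,2) by (rule mult_ge1_I)
  then have "B * E + C \<le> B * E * (1 + C)"
    using one_le_activation_bound by (simp add: algebra_simps)
  then have "N * (B * E + C) + 1 \<le> N * (B * E * (1 + C)) + B * E"
    using mult_left_mono[of _ _ N] BE by (fastforce simp: N_def)
  also have "\<dots> = B * E * (N * (1 + C) + 1)"
    by (simp add: algebra_simps)
  finally have key: "N * (B * E + C) + 1 \<le> B * E * (N * (1 + C) + 1)" .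
  have "C' * (N * (B * E * \<delta> + \<delta> * C) + \<delta>) = C' * (N * (B * E + C) + 1) * \<delta>"
    by (simp add: algebra_simps)
  also have "\<dots> \<le> B * E * (C' * (N * (1 + C) + 1)) * \<delta>"
    using mult_right_mono[OF mult_left_mono[OF key lipschitz_const_nonneg] assms(3)] by (simp add: mult_ac)
  also have "\<dots> \<le> B * E * layer_gain * \<delta>"
    using BE assms(3) by (intro mult_right_mono mult_left_mono) (auto simp: layer_gain_def N_def)
  finally show ?thesis
    by (simp add: N_def mult_ac)
qed

lemma cnn_o_bounded:
  assumes "0 < r \<or> (p \<in> pix d1 d2 \<and> \<bar>x p\<bar> \<le> 1)"
  shows "\<bar>cnn_o \<sigma> d1 d2 M kc w k x r p s\<bar> \<le> C"
  using assms activation_bounded one_le_activation_bound by (cases r) auto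

lemma cnn_o_Suc_diff_le:
  assumes close: "\<And>j. \<bar>w' j - w j\<bar> \<le> \<delta>" and "0 \<le> \<epsilon>"
    and prev_bounded: "\<And>q s1. q \<in> pix d1 d2 \<Longrightarrow> \<bar>cnn_o \<sigma> d1 d2 M kc w' k x r q s1\<bar> \<le> C"
    and prev_diff: "\<And>q s1 t1 t2. q \<in> pix d1 d2 \<Longrightarrow> s1 \<in> {1..kc r} \<Longrightarrow>
        t1 \<in> {1..M (Suc r)} \<Longrightarrow> t2 \<in> {1..M (Suc r)} \<Longrightarrow>
        \<bar>w (Conv (Suc r) t1 t2 s1 s k)\<bar> *
        \<bar>cnn_o \<sigma> d1 d2 M kc w' k x r q s1 - cnn_o \<sigma> d1 d2 M kc w k x r q s1\<bar> \<le> \<epsilon>"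
  shows "\<bar>cnn_o \<sigma> d1 d2 M kc w' k x (Suc r) p s - cnn_o \<sigma> d1 d2 M kc w k x (Suc r) p s\<bar>
    \<le> C' * (real (A1 * A2^2) * (\<epsilon> + \<delta> * C) + \<delta>)"
proof -
  define T where "T v s1 t1 t2 = (if (fst p + t1 - 1, snd p + t2 - 1) \<in> pix d1 d2
     then v (Conv (Suc r) t1 t2 s1 s k) * cnn_o \<sigma> d1 d2 M kc v k x r (fst p + t1 - 1, snd p + t2 - 1) s1
     else 0)" for v s1 t1 t2
  define u where "u v = (\<Sum>s1\<in>{1..kc r}. \<Sum>t1\<in>{1..M (Suc r)}. \<Sum>t2\<in>{1..M (Suc r)}. T v s1 t1 t2)
     + v (Bias (Suc r) s k)" for v
  have \<delta>: "0 \<le> \<delta>"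
    using close[of undefined] by linarith
  have term_diff: "\<bar>T w' s1 t1 t2 - T w s1 t1 t2\<bar> \<le> \<epsilon> + \<delta> * C"
    if "s1 \<in> {1..kc r}" "t1 \<in> {1..M (Suc r)}" "t2 \<in> {1..M (Suc r)}" for s1 t1 t2
  proof (cases "(fst p + t1 - 1, snd p + t2 - 1) \<in> pix d1 d2")
    case True
    define q where "q = (fst p + t1 - 1, snd p + t2 - 1)"
    have "\<bar>w (Conv (Suc r) t1 t2 s1 s k)\<bar> * \<bar>cnn_o \<sigma> d1 d2 M kc w' k x r q s1 - cnn_o \<sigma> d1 d2 M kc w k x r q s1\<bar>
        + \<bar>w' (Conv (Suc r) t1 t2 s1 s k) - w (Conv (Suc r) t1 t2 s1 s k)\<bar> * \<bar>cnn_o \<sigma> d1 d2 M kc w' k x r q s1\<bar>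
        \<le> \<epsilon> + \<delta> * C"
      using prev_diff[of q s1 t1 t2] prev_bounded[of q s1] close[of "Conv (Suc r) t1 t2 s1 s k"] True that \<delta>
      unfolding q_def by (intro add_mono mult_mono) auto
    then show ?thesis
      using True abs_mult_diff_le[of "w' (Conv (Suc r) t1 t2 s1 s k)" "cnn_o \<sigma> d1 d2 M kc w' k x r q s1"
          "w (Conv (Suc r) t1 t2 s1 s k)" "cnn_o \<sigma> d1 d2 M kc w k x r q s1"]
      unfolding T_def q_def by simp
  qed (use \<open>0 \<le> \<epsilon>\<close> \<delta> one_le_activation_bound in \<open>simp add: T_def\<close>)
  have u_diff: "\<bar>u w' - u w\<bar> \<le> real (A1 * A2^2) * (\<epsilon> + \<delta> * C) + \<delta>"
  proof -
    have "\<bar>\<Sum>s1\<in>{1..kc r}. \<Sum>t1\<in>{1..M (Suc r)}. \<Sum>t2\<in>{1..M (Suc r)}. T w' s1 t1 t2 - T w s1 t1 t2\<bar>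
        \<le> real (kc r) * (real (M (Suc r)) * (real (M (Suc r)) * (\<epsilon> + \<delta> * C)))"
      using term_diff by (intro order_trans[OF abs_sum_le_card_mult] mult_left_mono abs_sum_le_card_mult) auto
    also have "\<dots> \<le> real A1 * (real A2 * (real A2 * (\<epsilon> + \<delta> * C)))"
      using channels_le filter_size_le \<open>0 \<le> \<epsilon>\<close> \<delta> one_le_activation_bound
      by (intro mult_mono) auto
    also have "\<dots> = real (A1 * A2^2) * (\<epsilon> + \<delta> * C)"
      by (simp add: power2_eq_square)
    finally show ?thesis
      using close[of "Bias (Suc r) s k"]
      by (simp add: u_def sum_subtractf abs_triangle_ineq order_trans[OF abs_triangle_ineq])
  qed
  have "cnn_o \<sigma> d1 d2 M kc v k x (Suc r) p s = \<sigma> (u v)" for v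
    by (simp add: u_def T_def)
  then have "\<bar>cnn_o \<sigma> d1 d2 M kc w' k x (Suc r) p s - cnn_o \<sigma> d1 d2 M kc w k x (Suc r) p s\<bar>
      \<le> C' * \<bar>u w' - u w\<bar>"
    by (simp add: activation_lipschitz)
  also have "\<dots> \<le> C' * (real (A1 * A2^2) * (\<epsilon> + \<delta> * C) + \<delta>)"
    using u_diff lipschitz_const_nonneg by (rule mult_left_mono)
  finally show ?thesis .
qed

definition deep_weights_bounded :: "real \<Rightarrow> (widx \<Rightarrow> real) \<Rightarrow> nat \<Rightarrow> bool" where
  "deep_weights_bounded B w k \<longleftrightarrow> (\<forall>r\<in>{2..L}. \<forall>s2\<in>{1..kc r}. \<forall>s1\<in>{1..kc (r - 1)}.
     \<forall>t1\<in>{1..M r}. \<forall>t2\<in>{1..M r}. \<bar>w (Conv r t1 t2 s1 s2 k)\<bar> \<le> B)"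

lemma cnn_o_perturbation_le:
  assumes close: "\<And>j. \<bar>w' j - w j\<bar> \<le> \<delta>" and "\<delta> \<le> 1"
    and input: "\<And>p. p \<in> pix d1 d2 \<Longrightarrow> \<bar>x p\<bar> \<le> 1"
    and deep_weights: "deep_weights_bounded B w k"
    and "1 \<le> B"
  shows "r \<le> L \<Longrightarrow> s \<in> {1..kc r} \<Longrightarrow>
    \<bar>cnn_o \<sigma> d1 d2 M kc w' k x r p s - cnn_o \<sigma> d1 d2 M kc w k x r p s\<bar> \<le> (layer_gain * B) ^ r * \<delta>"
proof (induction r arbitrary: p s)
  case 0
  then show ?case using close[of undefined] by simp
next
  case (Suc r)
  define E where "E = (layer_gain * B) ^ r"
  have \<delta>: "0 \<le> \<delta>" using close[of undefined] by linarith
  have E: "1 \<le> E"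
    unfolding E_def using one_le_layer_gain \<open>1 \<le> B\<close> by (intro one_le_power mult_ge1_I)
  have "\<bar>w (Conv (Suc r) t1 t2 s1 s k)\<bar> *
      \<bar>cnn_o \<sigma> d1 d2 M kc w' k x r q s1 - cnn_o \<sigma> d1 d2 M kc w k x r q s1\<bar> \<le> B * E * \<delta>"
    if "s1 \<in> {1..kc r}" "t1 \<in> {1..M (Suc r)}" "t2 \<in> {1..M (Suc r)}" for q s1 t1 t2
  proof (cases r)
    case 0 \<comment> \<open>the first-layer weights are unbounded, but the input x does not depend on w\<close>
    then show ?thesis using E \<delta> \<open>1 \<le> B\<close> by simp
  next
    case (Suc r')
    have "\<bar>w (Conv (Suc r) t1 t2 s1 s k)\<bar> \<le> B"
      using deep_weights Suc Suc.prems that by (auto simp: deep_weights_bounded_def)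
    moreover have "\<bar>cnn_o \<sigma> d1 d2 M kc w' k x r q s1 - cnn_o \<sigma> d1 d2 M kc w k x r q s1\<bar> \<le> E * \<delta>"
      unfolding E_def using Suc.IH Suc.prems that by simp
    ultimately show ?thesis
      unfolding mult.assoc using \<open>1 \<le> B\<close> by (intro mult_mono) auto
  qed
  then have "\<bar>cnn_o \<sigma> d1 d2 M kc w' k x (Suc r) p s - cnn_o \<sigma> d1 d2 M kc w k x (Suc r) p s\<bar>
      \<le> C' * (real (A1 * A2^2) * (B * E * \<delta> + \<delta> * C) + \<delta>)"
    using E \<delta> \<open>1 \<le> B\<close> input
    by (intro cnn_o_Suc_diff_le[OF close] cnn_o_bounded) auto
  also have "\<dots> \<le> (layer_gain * B) ^ Suc r * \<delta>"
    using layer_gain_step[OF \<open>1 \<le> B\<close> E \<delta>] by (simp add: E_def mult_ac)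
  finally show ?case .
qed

lemma cnn_fk_bounded: "\<bar>cnn_fk \<sigma> d1 d2 L M kc w k x\<bar> \<le> C"
  unfolding cnn_fk_def
  using cnn_o_bounded depth_pos one_le_activation_bound by (intro abs_grid_mean_le) auto

lemma cnn_fk_perturbation_le:
  assumes close: "\<And>j. \<bar>w' j - w j\<bar> \<le> \<delta>" and "\<delta> \<le> 1"
    and "\<And>p. p \<in> pix d1 d2 \<Longrightarrow> \<bar>x p\<bar> \<le> 1"
    and "deep_weights_bounded B w k" and "1 \<le> B"
  shows "\<bar>cnn_fk \<sigma> d1 d2 L M kc w' k x - cnn_fk \<sigma> d1 d2 L M kc w k x\<bar> \<le> (layer_gain * B) ^ L * \<delta>"
proof -
  have "cnn_fk \<sigma> d1 d2 L M kc w' k x - cnn_fk \<sigma> d1 d2 L M kc w k x =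
    1 / (real (d1 - M (L+1) + 1) * real (d2 - M (L+1) + 1)) *
     (\<Sum>i\<in>{1..d1 - M (L+1) + 1}. \<Sum>j\<in>{1..d2 - M (L+1) + 1}.
        cnn_o \<sigma> d1 d2 M kc w' k x L (i, j) 1 - cnn_o \<sigma> d1 d2 M kc w k x L (i, j) 1)"
    unfolding cnn_fk_def by (simp add: sum_subtractf right_diff_distrib)
  also have "\<bar>\<dots>\<bar> \<le> (layer_gain * B) ^ L * \<delta>"
    using assms output_channel one_le_layer_gain order_trans[OF abs_ge_zero close]
    by (intro abs_grid_mean_le cnn_o_perturbation_le[where w' = w' and w = w]) auto
  finally show ?thesis .
qed

definition net_lipschitz :: "real \<Rightarrow> real \<Rightarrow> real" where
  "net_lipschitz \<gamma> B = C + \<gamma> * (layer_gain * B) ^ L"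

lemma net_lipschitz_nonneg: "0 \<le> \<gamma> \<Longrightarrow> 0 \<le> B \<Longrightarrow> 0 \<le> net_lipschitz \<gamma> B"
  unfolding net_lipschitz_def using one_le_activation_bound one_le_layer_gain by simp

lemma net_lipschitz_le:
  assumes "1 \<le> \<gamma>" and "1 \<le> B"
  shows "net_lipschitz \<gamma> B \<le> (C + layer_gain ^ L) * (\<gamma> * B ^ L)"
proof -
  have "1 \<le> \<gamma> * B ^ L"
    using assms by (intro mult_ge1_I one_le_power)
  then show ?thesis
    using mult_left_mono[of 1 "\<gamma> * B ^ L" C] one_le_activation_bound
    by (simp add: net_lipschitz_def power_mult_distrib algebra_simps)
qed

lemma cnn_f_fun_upd_diff_le:
  assumes input: "\<And>p. p \<in> pix d1 d2 \<Longrightarrow> \<bar>x p\<bar> \<le> 1"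
    and outer: "\<And>k. k \<in> {1..K} \<Longrightarrow> \<bar>w (Outer k)\<bar> \<le> \<gamma>" and "0 \<le> \<gamma>"
    and deep_weights: "\<And>k. k \<in> {1..K} \<Longrightarrow> deep_weights_bounded B w k"
    and "1 \<le> B" and "\<bar>z - w i\<bar> \<le> 1"
  shows "\<bar>cnn_f \<sigma> d1 d2 L M kc K (w(i := z)) x - cnn_f \<sigma> d1 d2 L M kc K w x\<bar>
    \<le> net_lipschitz \<gamma> B * \<bar>z - w i\<bar>"
proof -
  define w' where "w' = w(i := z)"
  define a where "a = widx_net i"
  define t where "t k = w' (Outer k) * cnn_fk \<sigma> d1 d2 L M kc w' k x - w (Outer k) * cnn_fk \<sigma> d1 d2 L M kc w k x"
    for k
  have "t k = 0" if "k \<noteq> a" for k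
    using that by (auto simp: t_def w'_def a_def cnn_fk_fun_upd_other)
  then have "cnn_f \<sigma> d1 d2 L M kc K w' x - cnn_f \<sigma> d1 d2 L M kc K w x = (if a \<in> {1..K} then t a else 0)"
    unfolding cnn_f_def sum_subtractf[symmetric] t_def[symmetric] by (intro sum_single_support) auto
  also have "\<bar>\<dots>\<bar> \<le> net_lipschitz \<gamma> B * \<bar>z - w i\<bar>"
  proof (cases "a \<in> {1..K}")
    case True
    have "\<bar>cnn_fk \<sigma> d1 d2 L M kc w' a x - cnn_fk \<sigma> d1 d2 L M kc w a x\<bar> \<le> (layer_gain * B) ^ L * \<bar>z - w i\<bar>"
      unfolding w'_def using True input deep_weights \<open>1 \<le> B\<close> \<open>\<bar>z - w i\<bar> \<le> 1\<close>
      by (intro cnn_fk_perturbation_le abs_fun_upd_diff_le) auto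
    then have "\<bar>w (Outer a)\<bar> * \<bar>cnn_fk \<sigma> d1 d2 L M kc w' a x - cnn_fk \<sigma> d1 d2 L M kc w a x\<bar>
        + \<bar>w' (Outer a) - w (Outer a)\<bar> * \<bar>cnn_fk \<sigma> d1 d2 L M kc w' a x\<bar>
        \<le> \<gamma> * ((layer_gain * B) ^ L * \<bar>z - w i\<bar>) + \<bar>z - w i\<bar> * C"
      unfolding w'_def using outer[OF True] \<open>0 \<le> \<gamma>\<close>
      by (intro add_mono mult_mono abs_fun_upd_diff_le cnn_fk_bounded) auto
    then have "\<bar>t a\<bar> \<le> \<gamma> * ((layer_gain * B) ^ L * \<bar>z - w i\<bar>) + \<bar>z - w i\<bar> * C"
      unfolding t_def by (rule order_trans[OF abs_mult_diff_le])
    then show ?thesis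
      using True by (simp add: net_lipschitz_def algebra_simps)
  qed (use \<open>0 \<le> \<gamma>\<close> one_le_activation_bound one_le_layer_gain \<open>1 \<le> B\<close> in \<open>auto simp: net_lipschitz_def\<close>)
  finally show ?thesis unfolding w'_def .
qed

lemma Fn_fun_upd_diff_le:
  assumes "\<And>j p. j \<in> {1..n} \<Longrightarrow> p \<in> pix d1 d2 \<Longrightarrow> \<bar>X j p\<bar> \<le> 1"
    and "\<And>k. k \<in> {1..K} \<Longrightarrow> \<bar>w (Outer k)\<bar> \<le> \<gamma>" and "0 \<le> \<gamma>"
    and "\<And>k. k \<in> {1..K} \<Longrightarrow> deep_weights_bounded B w k"
    and "1 \<le> B" and "0 \<le> c4" and "\<bar>z - w i\<bar> \<le> 1"
  shows "\<bar>Fn \<sigma> d1 d2 L M kc K n X Y c4 (w(i := z)) - Fn \<sigma> d1 d2 L M kc K n X Y c4 w\<bar>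
    \<le> (net_lipschitz \<gamma> B * (2 * sample_mean n (\<lambda>j. \<bar>Y j - cnn_f \<sigma> d1 d2 L M kc K w (X j)\<bar>)
        + net_lipschitz \<gamma> B) + c4 * (2 * \<gamma> + 1)) * \<bar>z - w i\<bar>"
proof -
  define \<Lambda> where "\<Lambda> = net_lipschitz \<gamma> B"
  define S where "S = sample_mean n (\<lambda>j. \<bar>Y j - cnn_f \<sigma> d1 d2 L M kc K w (X j)\<bar>)"
  define \<delta> where "\<delta> = \<bar>z - w i\<bar>"
  have \<Lambda>: "0 \<le> \<Lambda>"
    unfolding \<Lambda>_def using \<open>0 \<le> \<gamma>\<close> \<open>1 \<le> B\<close> by (simp add: net_lipschitz_nonneg)
  have loss: "\<bar>sample_mean n (\<lambda>j. \<bar>Y j - cnn_f \<sigma> d1 d2 L M kc K (w(i := z)) (X j)\<bar>^2)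
      - sample_mean n (\<lambda>j. \<bar>Y j - cnn_f \<sigma> d1 d2 L M kc K w (X j)\<bar>^2)\<bar> \<le> \<Lambda> * \<delta> * (2 * S + \<Lambda> * \<delta>)"
    unfolding S_def \<Lambda>_def \<delta>_def using assms
    by (intro sample_mean_square_diff_le cnn_f_fun_upd_diff_le) auto
  have penalty: "\<bar>(\<Sum>k\<in>{1..K}. ((w(i := z)) (Outer k))^2) - (\<Sum>k\<in>{1..K}. (w (Outer k))^2)\<bar>
      \<le> (2 * \<gamma> + 1) * \<delta>"
    unfolding \<delta>_def using assms by (intro penalty_fun_upd_diff_le) auto
  have "Fn \<sigma> d1 d2 L M kc K n X Y c4 (w(i := z)) - Fn \<sigma> d1 d2 L M kc K n X Y c4 w
      = (sample_mean n (\<lambda>j. \<bar>Y j - cnn_f \<sigma> d1 d2 L M kc K (w(i := z)) (X j)\<bar>^2)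
          - sample_mean n (\<lambda>j. \<bar>Y j - cnn_f \<sigma> d1 d2 L M kc K w (X j)\<bar>^2))
        + c4 * ((\<Sum>k\<in>{1..K}. ((w(i := z)) (Outer k))^2) - (\<Sum>k\<in>{1..K}. (w (Outer k))^2))"
    unfolding Fn_def by (simp add: algebra_simps)
  then have "\<bar>Fn \<sigma> d1 d2 L M kc K n X Y c4 (w(i := z)) - Fn \<sigma> d1 d2 L M kc K n X Y c4 w\<bar>
      \<le> \<Lambda> * \<delta> * (2 * S + \<Lambda> * \<delta>) + c4 * ((2 * \<gamma> + 1) * \<delta>)"
    using loss mult_left_mono[OF penalty \<open>0 \<le> c4\<close>] \<open>0 \<le> c4\<close>
    by (simp only: abs_triangle_ineq abs_mult abs_of_nonneg order_trans[OF abs_triangle_ineq add_mono])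
  also have "\<dots> \<le> (\<Lambda> * (2 * S + \<Lambda>) + c4 * (2 * \<gamma> + 1)) * \<delta>"
  proof -
    have "\<Lambda> * \<delta> \<le> \<Lambda>"
      using \<Lambda> \<open>\<bar>z - w i\<bar> \<le> 1\<close> by (simp add: \<delta>_def mult_left_le)
    then have "\<Lambda> * \<delta> * (2 * S + \<Lambda> * \<delta>) \<le> \<Lambda> * \<delta> * (2 * S + \<Lambda>)"
      using \<Lambda> by (intro mult_left_mono add_left_mono) (auto simp: \<delta>_def)
    then show ?thesis
      by (simp add: algebra_simps)
  qed
  finally show ?thesis
    unfolding \<delta>_def \<Lambda>_def S_def .
qed

lemma abs_partial_Fn_le:
  assumes "\<And>x. \<sigma> differentiable (at x)"
    and input: "\<And>j p. j \<in> {1..n} \<Longrightarrow> p \<in> pix d1 d2 \<Longrightarrow> \<bar>X j p\<bar> \<le> 1"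
    and outer: "\<And>k. k \<in> {1..K} \<Longrightarrow> \<bar>w (Outer k)\<bar> \<le> \<gamma>" and "0 \<le> \<gamma>"
    and deep_weights: "\<And>k. k \<in> {1..K} \<Longrightarrow> deep_weights_bounded B w k"
    and "1 \<le> B" and "0 \<le> c4"
  shows "\<bar>deriv (\<lambda>z. Fn \<sigma> d1 d2 L M kc K n X Y c4 (w(i := z))) (w i)\<bar>
    \<le> net_lipschitz \<gamma> B * (2 * sample_mean n (\<lambda>j. \<bar>Y j - cnn_f \<sigma> d1 d2 L M kc K w (X j)\<bar>)
        + net_lipschitz \<gamma> B) + c4 * (2 * \<gamma> + 1)"
proof (rule abs_deriv_le_of_local_lipschitz[OF differentiable_Fn_fun_upd[OF assms(1)] zero_less_one])
  fix z assume "\<bar>z - w i\<bar> < 1"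
  then show "\<bar>Fn \<sigma> d1 d2 L M kc K n X Y c4 (w(i := z)) - Fn \<sigma> d1 d2 L M kc K n X Y c4 (w(i := w i))\<bar>
      \<le> (net_lipschitz \<gamma> B * (2 * sample_mean n (\<lambda>j. \<bar>Y j - cnn_f \<sigma> d1 d2 L M kc K w (X j)\<bar>)
        + net_lipschitz \<gamma> B) + c4 * (2 * \<gamma> + 1)) * \<bar>z - w i\<bar>"
    using Fn_fun_upd_diff_le[where w = w and i = i and z = z, OF input outer \<open>0 \<le> \<gamma>\<close> deep_weights
        \<open>1 \<le> B\<close> \<open>0 \<le> c4\<close>]
    by simp
qed

lemma abs_cnn_f_le: "\<bar>cnn_f \<sigma> d1 d2 L M kc K w x\<bar> \<le> C * (\<Sum>k\<in>{1..K}. \<bar>w (Outer k)\<bar>)"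
  unfolding cnn_f_def sum_distrib_left
  using cnn_fk_bounded
  by (intro order_trans[OF sum_abs] sum_mono) (auto simp: abs_mult mult.commute[of C] intro: mult_left_mono)

lemma sample_mean_residual_le:
  assumes "1 \<le> n" and outer: "\<And>k. k \<in> {1..K} \<Longrightarrow> \<bar>w (Outer k)\<bar> \<le> \<gamma>"
    and close: "\<And>k. k \<in> {1..K} \<Longrightarrow> \<bar>w (Outer k) - v (Outer k)\<bar> \<le> D"
  shows "sample_mean n (\<lambda>j. \<bar>Y j - cnn_f \<sigma> d1 d2 L M kc K w (X j)\<bar>)
    \<le> sample_mean n (\<lambda>j. \<bar>Y j - cnn_f \<sigma> d1 d2 L M kc K v (X j)\<bar>) + real K * C * (2 * \<gamma> + D)"
proof (rule sample_mean_le_add[OF \<open>1 \<le> n\<close>])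
  fix j
  have "(\<Sum>k\<in>{1..K}. \<bar>v (Outer k)\<bar>) + (\<Sum>k\<in>{1..K}. \<bar>w (Outer k)\<bar>) \<le> (\<Sum>k\<in>{1..K}. 2 * \<gamma> + D)"
    unfolding sum.distrib[symmetric] using outer close by (intro sum_mono) force
  then have "C * (\<Sum>k\<in>{1..K}. \<bar>v (Outer k)\<bar>) + C * (\<Sum>k\<in>{1..K}. \<bar>w (Outer k)\<bar>)
      \<le> real K * C * (2 * \<gamma> + D)"
    using one_le_activation_bound mult_left_mono[of _ _ C] by (fastforce simp: distrib_left[symmetric])
  then have "\<bar>cnn_f \<sigma> d1 d2 L M kc K v (X j)\<bar> + \<bar>cnn_f \<sigma> d1 d2 L M kc K w (X j)\<bar> \<le> real K * C * (2 * \<gamma> + D)"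
    using abs_cnn_f_le[where K = K and w = v and x = "X j"] abs_cnn_f_le[where K = K and w = w and x = "X j"]
    by linarith
  then show "\<bar>Y j - cnn_f \<sigma> d1 d2 L M kc K w (X j)\<bar>
      \<le> \<bar>Y j - cnn_f \<sigma> d1 d2 L M kc K v (X j)\<bar> + real K * C * (2 * \<gamma> + D)"
    by linarith
qed

lemma weight_idx_subset:
  "weight_idx L M kc K \<subseteq> Outer ` {1..K}
     \<union> (\<lambda>(r, t1, t2, s1, s2, k). Conv r t1 t2 s1 s2 k) ` ({1..L} \<times> {1..A2} \<times> {1..A2} \<times> {1..A1} \<times> {1..A1} \<times> {1..K})
     \<union> (\<lambda>(r, s, k). Bias r s k) ` ({1..L} \<times> {1..A1} \<times> {1..K})"
  unfolding weight_idx_def using channels_le filter_size_le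
  by (auto simp: image_iff) (meson le_trans)+

definition weight_count_factor :: nat where
  "weight_count_factor = 1 + L * A2^2 * A1^2 + L * A1"

lemma finite_weight_idx: "finite (weight_idx L M kc K)"
  by (rule finite_subset[OF weight_idx_subset]) auto

lemma card_weight_idx_le: "card (weight_idx L M kc K) \<le> weight_count_factor * K"
proof -
  let ?S2 = "{1..L} \<times> {1..A2} \<times> {1..A2} \<times> {1..A1} \<times> {1..A1} \<times> {1..K}"
  let ?S3 = "{1..L} \<times> {1..A1} \<times> {1..K}"
  have "card (weight_idx L M kc K) \<le> card (Outer ` {1..K}
     \<union> (\<lambda>(r, t1, t2, s1, s2, k). Conv r t1 t2 s1 s2 k) ` ?S2 \<union> (\<lambda>(r, s, k). Bias r s k) ` ?S3)"
    by (rule card_mono[OF _ weight_idx_subset]) auto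
  also have "\<dots> \<le> card (Outer ` {1..K}) + card ((\<lambda>(r, t1, t2, s1, s2, k). Conv r t1 t2 s1 s2 k) ` ?S2)
      + card ((\<lambda>(r, s, k). Bias r s k) ` ?S3)"
    by (rule order_trans[OF card_Un_le add_right_mono[OF card_Un_le]])
  also have "\<dots> \<le> card {1..K} + card ?S2 + card ?S3"
    by (intro add_mono card_image_le) auto
  also have "\<dots> = weight_count_factor * K"
    by (simp add: card_cartesian_product weight_count_factor_def power2_eq_square algebra_simps)
  finally show ?thesis .
qed

definition gradient_factor :: "real \<Rightarrow> real" where
  "gradient_factor c4 = 10 * C * (C + layer_gain ^ L) + (C + layer_gain ^ L)^2 + 3 * c4"

lemma gradient_factor_nonneg: "0 \<le> c4 \<Longrightarrow> 0 \<le> gradient_factor c4"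
  unfolding gradient_factor_def using one_le_activation_bound one_le_layer_gain by simp

definition gradient_constant :: "real \<Rightarrow> real" where
  "gradient_constant c4 = sqrt (real weight_count_factor) * gradient_factor c4"

lemma gradient_constant_pos: "0 < c4 \<Longrightarrow> 0 < gradient_constant c4"
  unfolding gradient_constant_def gradient_factor_def weight_count_factor_def
  using one_le_activation_bound one_le_layer_gain by (simp add: add_pos_nonneg)

lemma partial_bound_le_gradient_factor:
  assumes "1 \<le> \<gamma>" and "1 \<le> B" and "1 \<le> s" and "1 \<le> K" and "0 \<le> c4"
    and "0 \<le> S" and S: "S \<le> s + real K * C * (2 * \<gamma> + 2 * s)"
  shows "net_lipschitz \<gamma> B * (2 * S + net_lipschitz \<gamma> B) + c4 * (2 * \<gamma> + 1)
    \<le> real K * s * \<gamma>^2 * B^(2 * L) * gradient_factor c4"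
proof -
  define H where "H = C + layer_gain ^ L"
  define \<beta> where "\<beta> = B ^ L"
  define q where "q = real K * s * \<gamma>^2 * \<beta>^2"
  have C: "1 \<le> C" by (rule one_le_activation_bound)
  have \<beta>: "1 \<le> \<beta>" unfolding \<beta>_def using \<open>1 \<le> B\<close> by (rule one_le_power)
  have \<gamma>\<beta>: "1 \<le> \<gamma> * \<beta>" using \<open>1 \<le> \<gamma>\<close> \<beta> by (rule mult_ge1_I)
  have KC\<gamma>: "1 \<le> real K * C * \<gamma>" using \<open>1 \<le> K\<close> C \<open>1 \<le> \<gamma>\<close> by (simp add: mult_ge1_I)
  have Ks: "1 \<le> real K * s" using \<open>1 \<le> K\<close> \<open>1 \<le> s\<close> by (simp add: mult_ge1_I)
  have H: "0 \<le> H" unfolding H_def using C order_trans[OF zero_le_one one_le_layer_gain] by simp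
  have \<Lambda>: "net_lipschitz \<gamma> B \<le> H * (\<gamma> * \<beta>)"
    unfolding H_def \<beta>_def using \<open>1 \<le> \<gamma>\<close> \<open>1 \<le> B\<close> by (rule net_lipschitz_le)
  define P where "P = real K * C * \<gamma>"
  have "s \<le> P * s" and "P \<le> P * s" and "real K * C * s \<le> P * s"
    using mult_right_mono[OF KC\<gamma>, of s] mult_left_mono[OF \<open>1 \<le> s\<close>, of P] KC\<gamma> \<open>1 \<le> s\<close>
      mult_right_mono[OF mult_left_mono[OF \<open>1 \<le> \<gamma>\<close>, of "real K * C"], of s] C
    by (simp_all add: P_def)
  then have "2 * S \<le> 10 * (P * s)"
    using S by (simp add: P_def algebra_simps)
  then have S': "2 * S \<le> 10 * (real K * C * \<gamma> * s)"
    by (simp add: P_def)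
  have "net_lipschitz \<gamma> B * (2 * S + net_lipschitz \<gamma> B) \<le> H * (\<gamma> * \<beta>) * (10 * (real K * C * \<gamma> * s) + H * (\<gamma> * \<beta>))"
    using \<open>0 \<le> S\<close> H \<gamma>\<beta> net_lipschitz_nonneg[of \<gamma> B] \<open>1 \<le> \<gamma>\<close> \<open>1 \<le> B\<close>
    by (intro mult_mono[OF \<Lambda> add_mono[OF S' \<Lambda>]]) auto
  also have "\<dots> = 10 * C * H * (real K * s * \<gamma>^2 * \<beta>) + H^2 * (\<gamma>^2 * \<beta>^2)"
    by (simp add: algebra_simps power2_eq_square)
  also have "\<dots> \<le> 10 * C * H * q + H^2 * q"
  proof -
    have "\<beta> \<le> \<beta>^2"
      using mult_left_mono[OF \<beta>, of \<beta>] \<beta> by (simp add: power2_eq_square)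
    then have "real K * s * \<gamma>^2 * \<beta> \<le> q"
      unfolding q_def using Ks by (intro mult_left_mono) auto
    moreover have "\<gamma>^2 * \<beta>^2 \<le> q"
      unfolding q_def using mult_right_mono[OF Ks, of "\<gamma>^2 * \<beta>^2"] by (simp add: mult.assoc)
    ultimately show ?thesis
      using C H by (intro add_mono mult_left_mono) auto
  qed
  finally have "net_lipschitz \<gamma> B * (2 * S + net_lipschitz \<gamma> B) \<le> (10 * C * H + H^2) * q"
    by (simp add: algebra_simps)
  moreover have "c4 * (2 * \<gamma> + 1) \<le> 3 * c4 * q"
  proof -
    have "1 \<le> real K * s * \<beta>^2"
      using Ks \<beta> by (simp add: mult_ge1_I one_le_power)
    then have "\<gamma>^2 \<le> q"
      unfolding q_def using mult_left_mono[of 1 "real K * s * \<beta>^2" "\<gamma>^2"] by (simp add: algebra_simps)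
    moreover have "\<gamma> \<le> \<gamma>^2"
      using mult_left_mono[OF \<open>1 \<le> \<gamma>\<close>, of \<gamma>] \<open>1 \<le> \<gamma>\<close> by (simp add: power2_eq_square)
    ultimately show ?thesis
      using \<open>0 \<le> c4\<close> \<open>1 \<le> \<gamma>\<close> by (intro order_trans[OF mult_left_mono[of "2 * \<gamma> + 1" "3 * q"]]) auto
  qed
  ultimately show ?thesis
    by (simp add: gradient_factor_def H_def q_def \<beta>_def power_mult[symmetric] algebra_simps)
qed

lemma sample_mean_residual_le_of_risk:
  assumes "1 \<le> n" and outer: "\<And>k. k \<in> {1..K} \<Longrightarrow> \<bar>w (Outer k)\<bar> \<le> \<gamma>"
    and "0 \<le> c4" and "0 < s"
    and risk_v: "Fn \<sigma> d1 d2 L M kc K n X Y c4 v \<le> s^2"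
    and dist: "(sup_dist (weight_idx L M kc K) w v)^2 \<le> 2 * s^2"
  shows "sample_mean n (\<lambda>j. \<bar>Y j - cnn_f \<sigma> d1 d2 L M kc K w (X j)\<bar>) \<le> s + real K * C * (2 * \<gamma> + 2 * s)"
proof -
  have mean_v: "sample_mean n (\<lambda>j. \<bar>Y j - cnn_f \<sigma> d1 d2 L M kc K v (X j)\<bar>) \<le> s"
  proof (rule sample_mean_abs_le)
    have "0 \<le> c4 * (\<Sum>k\<in>{1..K}. (v (Outer k))^2)"
      using \<open>0 \<le> c4\<close> by (simp add: sum_nonneg)
    then show "sample_mean n (\<lambda>j. (Y j - cnn_f \<sigma> d1 d2 L M kc K v (X j))^2) \<le> s^2"
      using risk_v by (simp add: Fn_def)
  qed (use \<open>0 < s\<close> in simp)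
  have close: "\<bar>w (Outer k) - v (Outer k)\<bar> \<le> 2 * s" if "k \<in> {1..K}" for k
  proof (rule power2_le_imp_le)
    have "\<bar>w (Outer k) - v (Outer k)\<bar>^2 \<le> (sup_dist (weight_idx L M kc K) w v)^2"
      using that by (intro power_mono abs_le_sup_dist finite_weight_idx) (auto simp: weight_idx_def)
    then show "\<bar>w (Outer k) - v (Outer k)\<bar>^2 \<le> (2 * s)^2"
      using dist by (simp add: power_mult_distrib) (use zero_le_power2[of s] in linarith)
  qed (use \<open>0 < s\<close> in simp)
  have "sample_mean n (\<lambda>j. \<bar>Y j - cnn_f \<sigma> d1 d2 L M kc K w (X j)\<bar>)
      \<le> sample_mean n (\<lambda>j. \<bar>Y j - cnn_f \<sigma> d1 d2 L M kc K v (X j)\<bar>) + real K * C * (2 * \<gamma> + 2 * s)"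
    using close by (intro sample_mean_residual_le[OF \<open>1 \<le> n\<close>] outer)
  then show ?thesis
    using mean_v by linarith
qed

lemma grad_norm_Fn_le:
  assumes "\<And>x. \<sigma> differentiable (at x)" and "1 \<le> n"
    and input: "\<And>j p. j \<in> {1..n} \<Longrightarrow> p \<in> pix d1 d2 \<Longrightarrow> \<bar>X j p\<bar> \<le> 1"
    and outer: "\<And>k. k \<in> {1..K} \<Longrightarrow> \<bar>w (Outer k)\<bar> \<le> \<gamma>" and "1 \<le> \<gamma>"
    and deep_weights: "\<And>k. k \<in> {1..K} \<Longrightarrow> deep_weights_bounded B w k"
    and "1 \<le> B" and "0 \<le> c4" and "1 \<le> s"
    and "Fn \<sigma> d1 d2 L M kc K n X Y c4 v \<le> s^2"
    and "(sup_dist (weight_idx L M kc K) w v)^2 \<le> 2 * s^2"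
  shows "grad_norm (Fn \<sigma> d1 d2 L M kc K n X Y c4) (weight_idx L M kc K) w
    \<le> gradient_constant c4 * real K powr (3/2) * B ^ (2 * L) * \<gamma>^2 * s"
proof -
  define b where "b = real K * s * \<gamma>^2 * B^(2 * L) * gradient_factor c4"
  have b: "0 \<le> b"
    unfolding b_def using \<open>1 \<le> s\<close> \<open>1 \<le> B\<close> gradient_factor_nonneg[OF \<open>0 \<le> c4\<close>] by simp
  have S: "sample_mean n (\<lambda>j. \<bar>Y j - cnn_f \<sigma> d1 d2 L M kc K w (X j)\<bar>)
      \<le> s + real K * C * (2 * \<gamma> + 2 * s)"
    by (rule sample_mean_residual_le_of_risk[where v = v]) (use assms in auto)
  have "\<bar>deriv (\<lambda>z. Fn \<sigma> d1 d2 L M kc K n X Y c4 (w(i := z))) (w i)\<bar> \<le> b"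
    if "i \<in> weight_idx L M kc K" for i
  proof -
    have "1 \<le> K"
      using widx_net_of_weight_idx[OF that] by simp
    then show ?thesis
      unfolding b_def using \<open>1 \<le> \<gamma>\<close>
      by (intro order_trans[OF abs_partial_Fn_le[OF assms(1) input outer _ deep_weights \<open>1 \<le> B\<close> \<open>0 \<le> c4\<close>]
            partial_bound_le_gradient_factor[OF \<open>1 \<le> \<gamma>\<close> \<open>1 \<le> B\<close> \<open>1 \<le> s\<close> _ \<open>0 \<le> c4\<close> _ S]])
        (auto simp: sum_nonneg)
  qed
  then have "grad_norm (Fn \<sigma> d1 d2 L M kc K n X Y c4) (weight_idx L M kc K) w
      \<le> sqrt (real (card (weight_idx L M kc K))) * b"
    using b by (intro grad_norm_le_sqrt_card_mult finite_weight_idx)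
  also have "\<dots> \<le> sqrt (real weight_count_factor * real K) * b"
    using card_weight_idx_le b by (intro mult_right_mono real_sqrt_le_mono) (simp_all flip: of_nat_mult)
  also have "\<dots> = gradient_constant c4 * real K powr (3/2) * B ^ (2 * L) * \<gamma>^2 * s"
    by (simp add: b_def gradient_constant_def powr_three_halves real_sqrt_mult algebra_simps)
  finally show ?thesis .
qed

end

theorem lemma3:
  fixes \<sigma> :: "real \<Rightarrow> real" and d1 d2 \<kappa> L :: nat and c4 :: real
  assumes sigma_bdd: "\<exists>C. \<forall>x. \<bar>\<sigma> x\<bar> \<le> C"
    and sigma_diff: "\<forall>x. \<sigma> differentiable (at x)"
    and sigma_deriv_bdd: "\<exists>C. \<forall>x. \<bar>deriv \<sigma> x\<bar> \<le> C"
    and kappa_pos: "\<kappa> \<ge> 1"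
    and kappa_le: "\<kappa> \<le> min d1 d2"
    and L_ge: "L \<ge> 2"
    and c4_pos: "c4 > 0"
  shows "\<exists>c8 > 0. \<forall>(n::nat) (K::nat) (X :: nat \<Rightarrow> nat \<times> nat \<Rightarrow> real) (Y :: nat \<Rightarrow> real)
            (tn::real) (Ln::real) (\<gamma>::real) (B::real) (w :: widx \<Rightarrow> real) (v :: widx \<Rightarrow> real).
     n \<ge> 1 \<longrightarrow>
     (\<forall>i\<in>{1..n}. (\<forall>p\<in>pix d1 d2. X i p \<in> {0..1}) \<and> Y i \<in> {0, 1}) \<longrightarrow>
     tn > 0 \<longrightarrow> Ln > 0 \<longrightarrow> tn \<ge> Ln \<longrightarrow> \<gamma> \<ge> 1 \<longrightarrow> B \<ge> 1 \<longrightarrow>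
     (\<forall>k\<in>{1..K}. \<bar>w (Outer k)\<bar> \<le> \<gamma>) \<longrightarrow>
     (\<forall>r\<in>{2..L}. \<forall>k\<in>{1..K}. \<forall>s2\<in>{1..arch_k \<kappa> L r}.
        \<bar>w (Bias r s2 k)\<bar> \<le> B \<and>
        (\<forall>s1\<in>{1..arch_k \<kappa> L (r - 1)}. \<forall>t1\<in>{1..arch_M \<kappa> L r}. \<forall>t2\<in>{1..arch_M \<kappa> L r}.
           \<bar>w (Conv r t1 t2 s1 s2 k)\<bar> \<le> B)) \<longrightarrow>
     (sup_dist (weight_idx L (arch_M \<kappa> L) (arch_k \<kappa> L) K) w v)^2
        \<le> 2 * tn / Ln * max (Fn \<sigma> d1 d2 L (arch_M \<kappa> L) (arch_k \<kappa> L) K n X Y c4 v) 1 \<longrightarrow>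
     grad_norm (Fn \<sigma> d1 d2 L (arch_M \<kappa> L) (arch_k \<kappa> L) K n X Y c4)
               (weight_idx L (arch_M \<kappa> L) (arch_k \<kappa> L) K) w
       \<le> c8 * real K powr (3/2) * B ^ (2 * L) * \<gamma>^2
          * sqrt (tn / Ln * max (Fn \<sigma> d1 d2 L (arch_M \<kappa> L) (arch_k \<kappa> L) K n X Y c4 v) 1)"
proof -
  obtain C0 where C0: "\<forall>x. \<bar>\<sigma> x\<bar> \<le> C0" using sigma_bdd by blast
  obtain C' where C': "\<forall>x. \<bar>deriv \<sigma> x\<bar> \<le> C'" using sigma_deriv_bdd by blast
  interpret bounded_cnn \<sigma> "max C0 1" C' d1 d2 L "arch_M \<kappa> L" "arch_k \<kappa> L" "2 * \<kappa>^2" \<kappa>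
    using C0 C' sigma_diff kappa_pos L_ge
    by unfold_locales (auto simp: arch_M_def arch_k_def le_max_iff_disj intro: abs_diff_le_of_bounded_deriv)
  show ?thesis
  proof (intro exI[of _ "gradient_constant c4"] conjI allI impI, goal_cases)
    case 1
    show ?case using c4_pos by (rule gradient_constant_pos)
  next
    case (2 n K X Y tn Ln \<gamma> B w v)
    let ?F = "Fn \<sigma> d1 d2 L (arch_M \<kappa> L) (arch_k \<kappa> L) K n X Y c4"
    define s where "s = sqrt (tn / Ln * max (?F v) 1)"
    have ratio: "1 \<le> tn / Ln"
      using 2 by simp
    then have "1 \<le> tn / Ln * max (?F v) 1"
      by (rule mult_ge1_I) simp
    then have "1 \<le> s" and s2: "s^2 = tn / Ln * max (?F v) 1"
      unfolding s_def by simp_all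
    have "?F v \<le> s^2"
      unfolding s2 using mult_right_mono[OF ratio, of "max (?F v) 1"] by simp
    show ?case
      unfolding s_def[symmetric] using 2 sigma_diff c4_pos \<open>1 \<le> s\<close> \<open>?F v \<le> s^2\<close>
      by (intro grad_norm_Fn_le) (auto simp: s2 deep_weights_bounded_def)
  qed
qed

end
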